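(* Let $S$ be a compact, metrizable, separable space, let $A$ be the generator of a Feller semigroup on $C(S)$ with resolvent $R_\lambda=(\lambda-A)^{-1}$, $\lambda>0$, and let $\ell_\lambda$, $\lambda>0$, be the Laplace transform of an exit law for $A$. For $x\in S$ let $m_x$ be the Borel sub-probability measure on $[0,\infty)$ such that $\ell_\lambda(x)=\int_{[0,\infty)}e^{-\lambda t}\,m_x(\mathrm dt)$ for all $\lambda>0$. Then $m_x(\{0\})=0$ for every $x\in S$.
   Context: A Feller semigroup is a strongly continuous semigroup of positive contractions on $C(S)$ (real continuous functions, sup norm) with $T(0)=I$, not necessarily conservative. A family $\ell_\lambda$, $\lambda>0$, is the Laplace transform of an exit law for $A$ if: (a) $(0,\infty)\ni\lambda\mapsto\ell_\lambda\in C(S)$ is locally bounded, non-negative and not identically zero (i.e. $\ell_\lambda\neq0$ for at least one $\lambda$); (b) $\lim_{\lambda\to0+}\ell_\lambda(x)\le1$ for each $x\in S$; (c) $(\lambda-\mu)R_\lambda\ell_\mu=\ell_\mu-\ell_\lambda$ for all $\lambda,\mu>0$. For such $\ell_\lambda$, for each $x$ the function $\lambda\mapsto\ell_\lambda(x)$ is completely monotone with $\lim_{\lambda\to0+}\ell_\lambda(x)\le 1$, so by Bernstein's theorem there is a (unique) Borel sub-probability measure $m_x$ on $[0,\infty)$ with $\ell_\lambda(x)=\int e^{-\lambda t}m_x(\mathrm dt)$. *)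

theory Defs
  imports "HOL-Analysis.Analysis" "HOL-Probability.Probability"
begin

text \<open>C(S): real continuous functions on a compact space S (all bounded), sup norm,
  represented by the Banach space of bounded continuous functions.\<close>

definition feller_semigroup ::
  "(real \<Rightarrow> ('a::metric_space \<Rightarrow>\<^sub>C real) \<Rightarrow>\<^sub>L ('a \<Rightarrow>\<^sub>C real)) \<Rightarrow> bool" where
  "feller_semigroup T \<longleftrightarrow>
     T 0 = id_blinfun \<and>
     (\<forall>s t. s \<ge> 0 \<longrightarrow> t \<ge> 0 \<longrightarrow> T (s + t) = T s o\<^sub>L T t) \<and>
     (\<forall>f. ((\<lambda>t. blinfun_apply (T t) f) \<longlongrightarrow> f) (at_right 0)) \<and>
     (\<forall>t f. t \<ge> 0 \<longrightarrow> (\<forall>x. apply_bcontfun f x \<ge> 0) \<longrightarrow>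
              (\<forall>x. apply_bcontfun (blinfun_apply (T t) f) x \<ge> 0)) \<and>
     (\<forall>t. t \<ge> 0 \<longrightarrow> norm (T t) \<le> 1)"

definition gen_dom :: "(real \<Rightarrow> ('a::metric_space \<Rightarrow>\<^sub>C real) \<Rightarrow>\<^sub>L ('a \<Rightarrow>\<^sub>C real))
    \<Rightarrow> ('a \<Rightarrow>\<^sub>C real) set" where
  "gen_dom T = {f. \<exists>g. ((\<lambda>t. (1 / t) *\<^sub>R (blinfun_apply (T t) f - f)) \<longlongrightarrow> g) (at_right 0)}"

definition gen :: "(real \<Rightarrow> ('a::metric_space \<Rightarrow>\<^sub>C real) \<Rightarrow>\<^sub>L ('a \<Rightarrow>\<^sub>C real))
    \<Rightarrow> ('a \<Rightarrow>\<^sub>C real) \<Rightarrow> ('a \<Rightarrow>\<^sub>C real)" where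
  "gen T f = Lim (at_right 0) (\<lambda>t. (1 / t) *\<^sub>R (blinfun_apply (T t) f - f))"

definition resolvent :: "(real \<Rightarrow> ('a::metric_space \<Rightarrow>\<^sub>C real) \<Rightarrow>\<^sub>L ('a \<Rightarrow>\<^sub>C real))
    \<Rightarrow> real \<Rightarrow> ('a \<Rightarrow>\<^sub>C real) \<Rightarrow> ('a \<Rightarrow>\<^sub>C real)" where
  "resolvent T lam f = (THE g. g \<in> gen_dom T \<and> lam *\<^sub>R g - gen T g = f)"

definition exit_law_LT :: "(real \<Rightarrow> ('a::metric_space \<Rightarrow>\<^sub>C real) \<Rightarrow>\<^sub>L ('a \<Rightarrow>\<^sub>C real))
    \<Rightarrow> (real \<Rightarrow> ('a \<Rightarrow>\<^sub>C real)) \<Rightarrow> bool" where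
  "exit_law_LT T l \<longleftrightarrow>
     (\<forall>lam>0. \<exists>e>0. \<exists>B. \<forall>mu. mu > 0 \<and> \<bar>mu - lam\<bar> < e \<longrightarrow> norm (l mu) \<le> B) \<and>
     (\<forall>lam>0. \<forall>x. apply_bcontfun (l lam) x \<ge> 0) \<and>
     (\<exists>lam>0. l lam \<noteq> 0) \<and>
     (\<forall>x. \<exists>L. L \<le> 1 \<and> ((\<lambda>lam. apply_bcontfun (l lam) x) \<longlongrightarrow> L) (at_right 0)) \<and>
     (\<forall>lam>0. \<forall>mu>0. (lam - mu) *\<^sub>R resolvent T lam (l mu) = l mu - l lam)"

end

theory Submission
  imports Defs
begin

text \<open>
  For every lam > 0, m_x{0} <= l_lam(x) <= ||l_lam||, so it suffices that ||l_lam|| -> 0 as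
  lam -> oo. The resolvent identity gives l_lam = (l_1 - lam R_lam l_1) + R_lam l_1, and both terms
  vanish in the limit: ||R_lam|| <= 1/lam because A is dissipative, and lam R_lam f -> f because
  the domain of A is dense (it contains the averages of t -> T_t f over [0, tau]).
  The resolvent itself is obtained from the truncated Laplace transform of the semigroup
  applied to the fixed point of the contraction h -> f + e^-lam T_1 h.
\<close>

instance bcontfun :: (metric_space, banach) banach ..

lemma has_vector_derivative_imp_right_quotient_tendsto:
  fixes F :: "real \<Rightarrow> 'b::real_normed_vector"
  assumes "(F has_vector_derivative D) (at x within {x..b})" and "x < b"
  shows "((\<lambda>h. (1/h) *\<^sub>R (F (x + h) - F x)) \<longlongrightarrow> D) (at_right 0)"
proof -
  have "((\<lambda>y. (1 / norm (y - x)) *\<^sub>R (F y - (F x + (y - x) *\<^sub>R D))) \<longlongrightarrow> 0) (at_right x)"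
    using assms unfolding has_vector_derivative_def has_derivative_within
    by (simp add: at_within_Icc_at_right)
  then have "((\<lambda>h. (1 / norm h) *\<^sub>R (F (x + h) - (F x + h *\<^sub>R D))) \<longlongrightarrow> 0) (at_right 0)"
    by (simp add: at_right_to_0[of x] filterlim_filtermap add.commute)
  then have "((\<lambda>h. (1 / norm h) *\<^sub>R (F (x + h) - (F x + h *\<^sub>R D)) + D) \<longlongrightarrow> 0 + D) (at_right 0)"
    by (intro tendsto_add tendsto_const)
  moreover have "\<forall>\<^sub>F h in at_right 0.
      (1 / norm h) *\<^sub>R (F (x + h) - (F x + h *\<^sub>R D)) + D = (1/h) *\<^sub>R (F (x + h) - F x)"
    by (rule eventually_mono[OF eventually_at_right_less])
      (simp add: scaleR_diff_right diff_diff_eq[symmetric])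
  ultimately show ?thesis
    by (simp add: tendsto_cong)
qed

lemma right_quotient_tendsto_imp_tendsto:
  fixes F :: "real \<Rightarrow> 'b::real_normed_vector"
  assumes "((\<lambda>h. (1/h) *\<^sub>R (F (x + h) - F x)) \<longlongrightarrow> D) (at_right 0)"
  shows "((\<lambda>h. F (x + h)) \<longlongrightarrow> F x) (at_right 0)"
proof -
  have "((\<lambda>h. F x + h *\<^sub>R ((1/h) *\<^sub>R (F (x + h) - F x))) \<longlongrightarrow> F x + 0 *\<^sub>R D) (at_right 0)"
    by (intro tendsto_intros assms tendsto_ident_at)
  moreover have "\<forall>\<^sub>F h in at_right 0. F x + h *\<^sub>R ((1/h) *\<^sub>R (F (x + h) - F x)) = F (x + h)"
    by (rule eventually_mono[OF eventually_at_right_less]) simp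
  ultimately show ?thesis
    by (simp add: tendsto_cong)
qed

lemma integral_right_quotient_tendsto:
  fixes v :: "real \<Rightarrow> 'b::banach"
  assumes "continuous_on {a..} v" and "a \<le> x"
  shows "((\<lambda>h. (1/h) *\<^sub>R (integral {a..x + h} v - integral {a..x} v)) \<longlongrightarrow> v x) (at_right 0)"
proof (rule has_vector_derivative_imp_right_quotient_tendsto)
  have "((\<lambda>u. integral {a..u} v) has_vector_derivative v x) (at x within {a..x + 1})"
    using assms by (intro integral_has_vector_derivative continuous_on_subset[OF assms(1)]) auto
  then show "((\<lambda>u. integral {a..u} v) has_vector_derivative v x) (at x within {x..x + 1})"
    by (rule has_vector_derivative_within_subset) (use assms in auto)
qed simp

lemma exp_right_quotient_tendsto: "((\<lambda>h::real. (exp (c * h) - 1) / h) \<longlongrightarrow> c) (at_right 0)"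
proof -
  have "((\<lambda>h. exp (c * h)) has_field_derivative exp (c * 0) * c) (at 0)"
    by (auto intro!: derivative_eq_intros)
  then show ?thesis
    unfolding has_field_derivative_iff by (simp add: filterlim_at_split)
qed

context
  fixes T :: "real \<Rightarrow> ('a::metric_space \<Rightarrow>\<^sub>C real) \<Rightarrow>\<^sub>L ('a \<Rightarrow>\<^sub>C real)"
begin

lemma feller_semigroup_zero: "feller_semigroup T \<Longrightarrow> T 0 f = f"
  by (simp add: feller_semigroup_def)

lemma feller_semigroup_add:
  "feller_semigroup T \<Longrightarrow> 0 \<le> s \<Longrightarrow> 0 \<le> t \<Longrightarrow> T (s + t) f = T s (T t f)"
  by (simp add: feller_semigroup_def)

lemma feller_semigroup_norm_le: "feller_semigroup T \<Longrightarrow> 0 \<le> t \<Longrightarrow> norm (T t f) \<le> norm f"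
  unfolding feller_semigroup_def
  using norm_blinfun[of "T t" f] mult_right_mono[of "norm (T t)" 1 "norm f"] by force

lemma feller_semigroup_tendsto_at_right_0:
  "feller_semigroup T \<Longrightarrow> ((\<lambda>t. T t f) \<longlongrightarrow> f) (at_right 0)"
  by (simp add: feller_semigroup_def)

lemma feller_semigroup_uniformly_continuous_on:
  assumes fs: "feller_semigroup T"
  shows "uniformly_continuous_on {0..} (\<lambda>t. T t f)"
  unfolding uniformly_continuous_on_def
proof (intro allI impI)
  fix e :: real assume "0 < e"
  then obtain b where "0 < b" and b: "\<And>h. 0 < h \<Longrightarrow> h < b \<Longrightarrow> dist (T h f) f < e"
    using feller_semigroup_tendsto_at_right_0[OF fs, of f]
    unfolding tendsto_iff eventually_at_right_field by auto
  have close: "dist (T s f) (T t f) < e" if "0 \<le> t" "t < s" "s - t < b" for s t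
  proof -
    have "T s f - T t f = T t (T (s - t) f - f)"
      using feller_semigroup_add[OF fs, of t "s - t" f] that by (simp add: blinfun.diff_right)
    then have "dist (T s f) (T t f) \<le> dist (T (s - t) f) f"
      using feller_semigroup_norm_le[OF fs \<open>0 \<le> t\<close>] by (simp add: dist_norm)
    also have "\<dots> < e" using b that by simp
    finally show ?thesis .
  qed
  show "\<exists>d>0. \<forall>t\<in>{0..}. \<forall>s\<in>{0..}. dist s t < d \<longrightarrow> dist (T s f) (T t f) < e"
  proof (intro exI[of _ b] conjI ballI impI)
    fix t s :: real assume "t \<in> {0..}" "s \<in> {0..}" "dist s t < b"
    then have "\<bar>s - t\<bar> < b" "0 \<le> s" "0 \<le> t" by (auto simp: dist_real_def)
    then show "dist (T s f) (T t f) < e"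
      using close[of t s] close[of s t] \<open>0 < e\<close>
      by (cases s t rule: linorder_cases) (auto simp: dist_commute)
  qed (rule \<open>0 < b\<close>)
qed

lemma feller_semigroup_continuous_on:
  "feller_semigroup T \<Longrightarrow> continuous_on {0..} (\<lambda>t. T t f)"
  by (rule uniformly_continuous_imp_continuous[OF feller_semigroup_uniformly_continuous_on])

lemma gen_tendsto:
  "f \<in> gen_dom T \<Longrightarrow> ((\<lambda>t. (1 / t) *\<^sub>R (T t f - f)) \<longlongrightarrow> gen T f) (at_right 0)"
  unfolding gen_dom_def gen_def using tendsto_Lim[OF trivial_limit_at_right_real] by blast

lemma gen_eqI:
  assumes "((\<lambda>t. (1 / t) *\<^sub>R (T t f - f)) \<longlongrightarrow> g) (at_right 0)"
  shows "f \<in> gen_dom T" "gen T f = g"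
  using assms tendsto_Lim[OF trivial_limit_at_right_real]
  unfolding gen_dom_def gen_def by blast+

lemma gen_diff:
  assumes "f \<in> gen_dom T" "g \<in> gen_dom T"
  shows "f - g \<in> gen_dom T" "gen T (f - g) = gen T f - gen T g"
proof -
  have "((\<lambda>t. (1 / t) *\<^sub>R (T t f - f) - (1 / t) *\<^sub>R (T t g - g)) \<longlongrightarrow> gen T f - gen T g) (at_right 0)"
    by (intro tendsto_diff gen_tendsto assms)
  then have "((\<lambda>t. (1 / t) *\<^sub>R (T t (f - g) - (f - g))) \<longlongrightarrow> gen T f - gen T g) (at_right 0)"
    by (simp add: blinfun.diff_right scaleR_diff_right algebra_simps)
  then show "f - g \<in> gen_dom T" "gen T (f - g) = gen T f - gen T g"
    by (rule gen_eqI)+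
qed

lemma gen_scaleR:
  assumes "f \<in> gen_dom T"
  shows "c *\<^sub>R f \<in> gen_dom T" "gen T (c *\<^sub>R f) = c *\<^sub>R gen T f"
proof -
  have "((\<lambda>t. c *\<^sub>R ((1 / t) *\<^sub>R (T t f - f))) \<longlongrightarrow> c *\<^sub>R gen T f) (at_right 0)"
    by (intro tendsto_scaleR tendsto_const gen_tendsto assms)
  then have "((\<lambda>t. (1 / t) *\<^sub>R (T t (c *\<^sub>R f) - c *\<^sub>R f)) \<longlongrightarrow> c *\<^sub>R gen T f) (at_right 0)"
    by (simp add: blinfun.scaleR_right scaleR_diff_right)
  then show "c *\<^sub>R f \<in> gen_dom T" "gen T (c *\<^sub>R f) = c *\<^sub>R gen T f"
    by (rule gen_eqI)+
qed


lemma gen_dissipative: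
  assumes fs: "feller_semigroup T" and g: "g \<in> gen_dom T" and "0 < lam"
  shows "lam * norm g \<le> norm (lam *\<^sub>R g - gen T g)"
proof (rule tendsto_lowerbound)
  show "((\<lambda>t. norm (lam *\<^sub>R g - (1 / t) *\<^sub>R (T t g - g))) \<longlongrightarrow> norm (lam *\<^sub>R g - gen T g)) (at_right 0)"
    by (intro tendsto_norm tendsto_diff tendsto_const gen_tendsto g)
  show "\<forall>\<^sub>F t in at_right 0. lam * norm g \<le> norm (lam *\<^sub>R g - (1 / t) *\<^sub>R (T t g - g))"
  proof (rule eventually_mono[OF eventually_at_right_less])
    fix t :: real assume "0 < t"
    have "norm ((lam + 1/t) *\<^sub>R g) = (lam + 1/t) * norm g"
      using \<open>0 < t\<close> \<open>0 < lam\<close> by simp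
    then have "lam * norm g = norm ((lam + 1/t) *\<^sub>R g) - (1/t) * norm g"
      by (simp add: distrib_right)
    also have "\<dots> \<le> norm ((lam + 1/t) *\<^sub>R g) - norm ((1/t) *\<^sub>R T t g)"
      using feller_semigroup_norm_le[OF fs, of t g] \<open>0 < t\<close> by (simp add: divide_right_mono)
    also have "\<dots> \<le> norm ((lam + 1/t) *\<^sub>R g - (1/t) *\<^sub>R T t g)"
      by (rule norm_triangle_ineq2)
    also have "(lam + 1/t) *\<^sub>R g - (1/t) *\<^sub>R T t g = lam *\<^sub>R g - (1 / t) *\<^sub>R (T t g - g)"
      by (simp add: scaleR_diff_right scaleR_add_left)
    finally show "lam * norm g \<le> norm (lam *\<^sub>R g - (1 / t) *\<^sub>R (T t g - g))" .
  qed
qed simp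

lemma feller_semigroup_apply_laplace_integral:
  fixes lam :: real and f :: "'a \<Rightarrow>\<^sub>C real"
  assumes fs: "feller_semigroup T" and "0 \<le> h"
  defines "v \<equiv> \<lambda>t. exp (- lam * t) *\<^sub>R T t f"
  shows "T h (integral {0..\<tau>} v) = exp (lam * h) *\<^sub>R integral {h..\<tau> + h} v"
proof -
  have "continuous_on {0..\<tau>} v"
    unfolding v_def
    by (intro continuous_intros continuous_on_subset[OF feller_semigroup_continuous_on[OF fs]]) auto
  then have "T h (integral {0..\<tau>} v) = integral {0..\<tau>} (T h \<circ> v)"
    by (simp add: integral_linear integrable_continuous_interval bounded_linear_blinfun_apply)
  also have "\<dots> = integral {0..\<tau>} (\<lambda>t. exp (lam * h) *\<^sub>R v (h + t))"
  proof (rule integral_cong)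
    fix t :: real assume "t \<in> {0..\<tau>}"
    then have "T h (T t f) = T (h + t) f"
      using feller_semigroup_add[OF fs, of h t f] \<open>0 \<le> h\<close> by simp
    moreover have "exp (- lam * t) = exp (lam * h) * exp (- lam * (h + t))"
      by (simp add: exp_add[symmetric] algebra_simps)
    ultimately show "(T h \<circ> v) t = exp (lam * h) *\<^sub>R v (h + t)"
      unfolding v_def by (simp add: blinfun.scaleR_right)
  qed
  also have "\<dots> = exp (lam * h) *\<^sub>R integral {0..\<tau>} (v \<circ> (+) h)"
    by (simp add: o_def)
  also have "integral {0..\<tau>} (v \<circ> (+) h) = integral {h..\<tau> + h} v"
    using integral_shift_Icc_real[of 0 \<tau> v h] by simp
  finally show ?thesis .
qed

lemma laplace_integral_gen:
  fixes lam :: real and f :: "'a \<Rightarrow>\<^sub>C real"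
  assumes fs: "feller_semigroup T" and "0 < \<tau>"
  defines "W \<equiv> integral {0..\<tau>} (\<lambda>t. exp (- lam * t) *\<^sub>R T t f)"
  shows "W \<in> gen_dom T" "gen T W = lam *\<^sub>R W + exp (- lam * \<tau>) *\<^sub>R T \<tau> f - f"
proof -
  define v where "v = (\<lambda>t. exp (- lam * t) *\<^sub>R T t f)"
  define F where "F = (\<lambda>u. integral {0..u} v)"
  have v_cont: "continuous_on {0..} v"
    unfolding v_def by (intro continuous_intros feller_semigroup_continuous_on[OF fs])
  have F_quotient: "((\<lambda>h. (1/h) *\<^sub>R (F (x + h) - F x)) \<longlongrightarrow> v x) (at_right 0)" if "0 \<le> x" for x
    unfolding F_def by (rule integral_right_quotient_tendsto[OF v_cont that])
  note F_right_cont = right_quotient_tendsto_imp_tendsto[OF F_quotient]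
  have F_0: "F 0 = 0" and W_eq: "W = F \<tau>" and v_0: "v 0 = f"
    by (simp_all add: F_def W_def v_def feller_semigroup_zero[OF fs])
  have apply_W: "T h (F \<tau>) = exp (lam * h) *\<^sub>R (F (\<tau> + h) - F h)" if "0 < h" for h
  proof -
    have "v integrable_on {0..\<tau> + h}"
      by (intro integrable_continuous_interval continuous_on_subset[OF v_cont]) auto
    then have "integral {h..\<tau> + h} v = F (\<tau> + h) - F h"
      unfolding F_def
      using Henstock_Kurzweil_Integration.integral_combine[of 0 h "\<tau> + h" v] \<open>0 < h\<close> \<open>0 < \<tau>\<close>
      by (simp add: algebra_simps)
    then show ?thesis
      using feller_semigroup_apply_laplace_integral[OF fs, where h=h and lam=lam and f=f and \<tau>=\<tau>] that
      unfolding F_def v_def by simp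
  qed
  have "((\<lambda>h. ((exp (lam * h) - 1) / h) *\<^sub>R (F (\<tau> + h) - F (0 + h))
            + (1/h) *\<^sub>R (F (\<tau> + h) - F \<tau>) - (1/h) *\<^sub>R (F (0 + h) - F 0))
        \<longlongrightarrow> lam *\<^sub>R (F \<tau> - F 0) + v \<tau> - v 0) (at_right 0)"
    using \<open>0 < \<tau>\<close> by (intro tendsto_intros exp_right_quotient_tendsto F_right_cont F_quotient) auto
  moreover have "\<forall>\<^sub>F h in at_right 0.
      ((exp (lam * h) - 1) / h) *\<^sub>R (F (\<tau> + h) - F (0 + h))
        + (1/h) *\<^sub>R (F (\<tau> + h) - F \<tau>) - (1/h) *\<^sub>R (F (0 + h) - F 0)
      = (1/h) *\<^sub>R (T h (F \<tau>) - F \<tau>)"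
    by (rule eventually_mono[OF eventually_at_right_less])
      (simp add: apply_W F_0 divide_inverse scaleR_diff_right scaleR_diff_left algebra_simps)
  ultimately have "((\<lambda>h. (1/h) *\<^sub>R (T h W - W)) \<longlongrightarrow> lam *\<^sub>R W + v \<tau> - f) (at_right 0)"
    unfolding W_eq F_0 v_0 by (simp add: tendsto_cong)
  then show "W \<in> gen_dom T" "gen T W = lam *\<^sub>R W + exp (- lam * \<tau>) *\<^sub>R T \<tau> f - f"
    unfolding v_def by (rule gen_eqI)+
qed

lemma resolvent_equation_unique:
  assumes fs: "feller_semigroup T" and "0 < lam" and "g \<in> gen_dom T" "g' \<in> gen_dom T"
    and "lam *\<^sub>R g - gen T g = lam *\<^sub>R g' - gen T g'"
  shows "g = g'"
proof -
  have "lam *\<^sub>R (g - g') - gen T (g - g') = (lam *\<^sub>R g - gen T g) - (lam *\<^sub>R g' - gen T g')"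
    by (simp add: gen_diff assms(3,4) scaleR_diff_right)
  also have "\<dots> = 0"
    using assms(5) by simp
  finally have "lam *\<^sub>R (g - g') - gen T (g - g') = 0" .
  then have "lam * norm (g - g') \<le> 0"
    using gen_dissipative[OF fs gen_diff(1)[OF assms(3,4)] \<open>0 < lam\<close>] by simp
  then show ?thesis
    using \<open>0 < lam\<close> by (simp add: mult_le_0_iff)
qed

lemma resolvent_equation_solvable:
  assumes fs: "feller_semigroup T" and "0 < lam"
  shows "\<exists>g \<in> gen_dom T. lam *\<^sub>R g - gen T g = f"
proof -
  define q where "q = exp (- lam)"
  have "0 \<le> q" "q < 1"
    unfolding q_def using \<open>0 < lam\<close> by auto
  have "dist (f + q *\<^sub>R T 1 h) (f + q *\<^sub>R T 1 h') \<le> q * dist h h'" for h h'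
  proof -
    have "dist (f + q *\<^sub>R T 1 h) (f + q *\<^sub>R T 1 h') = norm (q *\<^sub>R T 1 (h - h'))"
      by (simp add: dist_norm blinfun.diff_right scaleR_diff_right)
    also have "\<dots> = q * norm (T 1 (h - h'))"
      using \<open>0 \<le> q\<close> by simp
    also have "\<dots> \<le> q * dist h h'"
      using feller_semigroup_norm_le[OF fs, of 1 "h - h'"] \<open>0 \<le> q\<close>
      by (simp add: dist_norm mult_left_mono)
    finally show ?thesis .
  qed
  then obtain h where h: "f + q *\<^sub>R T 1 h = h"
    using banach_fix_type[OF \<open>0 \<le> q\<close> \<open>q < 1\<close>, of "\<lambda>h. f + q *\<^sub>R T 1 h"] by blast
  define W where "W = integral {0..1} (\<lambda>t. exp (- lam * t) *\<^sub>R T t h)"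
  have W: "W \<in> gen_dom T" "gen T W = lam *\<^sub>R W + q *\<^sub>R T 1 h - h"
    using laplace_integral_gen[OF fs zero_less_one, of lam h] unfolding W_def q_def by simp_all
  have "lam *\<^sub>R W - gen T W = h - q *\<^sub>R T 1 h"
    unfolding W(2) by simp
  also have "\<dots> = f"
    by (subst h[symmetric]) simp
  finally show ?thesis
    using W(1) by blast
qed

lemma resolvent_eq_iff:
  assumes fs: "feller_semigroup T" and "0 < lam"
  shows "resolvent T lam f = g \<longleftrightarrow> g \<in> gen_dom T \<and> lam *\<^sub>R g - gen T g = f"
proof -
  obtain g0 where g0: "g0 \<in> gen_dom T" "lam *\<^sub>R g0 - gen T g0 = f"
    using resolvent_equation_solvable[OF assms] by blast
  have "resolvent T lam f = g0"
    unfolding resolvent_def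
    using g0 resolvent_equation_unique[OF assms] by (intro the_equality) auto
  then show ?thesis
    using g0 resolvent_equation_unique[OF assms] by auto
qed

lemma resolvent_gen_dom:
  assumes "feller_semigroup T" and "0 < lam"
  shows "resolvent T lam f \<in> gen_dom T"
    and "lam *\<^sub>R resolvent T lam f - gen T (resolvent T lam f) = f"
  using resolvent_eq_iff[OF assms, of f "resolvent T lam f"] by simp_all

lemma norm_resolvent_le:
  assumes "feller_semigroup T" and "0 < lam"
  shows "lam * norm (resolvent T lam f) \<le> norm f"
  using gen_dissipative[OF assms(1) resolvent_gen_dom(1)[OF assms] assms(2)]
  by (simp add: resolvent_gen_dom(2)[OF assms])

lemma resolvent_diff:
  assumes "feller_semigroup T" and "0 < lam"
  shows "resolvent T lam (f - g) = resolvent T lam f - resolvent T lam g"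
  using resolvent_gen_dom[OF assms]
  by (subst resolvent_eq_iff[OF assms]) (simp add: gen_diff scaleR_diff_right algebra_simps)

lemma resolvent_gen:
  assumes fs: "feller_semigroup T" and "0 < lam" and k: "k \<in> gen_dom T"
  shows "resolvent T lam (gen T k) = lam *\<^sub>R resolvent T lam k - k"
proof -
  let ?R = "resolvent T lam k"
  have R: "?R \<in> gen_dom T" "lam *\<^sub>R ?R - gen T ?R = k"
    using resolvent_gen_dom[OF fs \<open>0 < lam\<close>] by blast+
  have "lam *\<^sub>R (lam *\<^sub>R ?R - k) - gen T (lam *\<^sub>R ?R - k)
      = lam *\<^sub>R (lam *\<^sub>R ?R - gen T ?R) - lam *\<^sub>R k + gen T k"
    by (simp add: gen_diff gen_scaleR R(1) k scaleR_diff_right)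
  also have "\<dots> = gen T k"
    by (simp add: R(2))
  finally show ?thesis
    using resolvent_eq_iff[OF fs \<open>0 < lam\<close>] gen_diff(1)[OF gen_scaleR(1)[OF R(1)] k] by blast
qed

lemma gen_dom_dense:
  assumes fs: "feller_semigroup T" and "0 < e"
  shows "\<exists>k \<in> gen_dom T. norm (f - k) \<le> e"
proof -
  obtain b where "0 < b" and b: "\<And>t. 0 < t \<Longrightarrow> t < b \<Longrightarrow> dist (T t f) f < e"
    using feller_semigroup_tendsto_at_right_0[OF fs, of f] \<open>0 < e\<close>
    unfolding tendsto_iff eventually_at_right_field by auto
  define \<tau> where "\<tau> = b / 2"
  have "0 < \<tau>" "\<tau> < b"
    using \<open>0 < b\<close> by (auto simp: \<tau>_def)
  have close: "norm (f - T t f) \<le> e" if "t \<in> {0..\<tau>}" for t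
    using b[of t] that \<open>\<tau> < b\<close> \<open>0 < e\<close> feller_semigroup_zero[OF fs, of f]
    by (cases "t = 0") (auto simp: dist_norm norm_minus_commute)
  have cont: "continuous_on {0..\<tau>} (\<lambda>t. T t f)"
    by (rule continuous_on_subset[OF feller_semigroup_continuous_on[OF fs]]) auto
  define W where "W = integral {0..\<tau>} (\<lambda>t. T t f)"
  have "W \<in> gen_dom T"
    using laplace_integral_gen(1)[OF fs \<open>0 < \<tau>\<close>, of 0 f] unfolding W_def by simp
  then have "(1 / \<tau>) *\<^sub>R W \<in> gen_dom T"
    by (rule gen_scaleR)
  have "\<tau> *\<^sub>R f - W = integral {0..\<tau>} (\<lambda>t. f - T t f)"
    unfolding W_def using integral_diff[OF integrable_const_ivl integrable_continuous_interval[OF cont]]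
      \<open>0 < \<tau>\<close> by simp
  also have "norm \<dots> \<le> e * (\<tau> - 0)"
    using \<open>0 < \<tau>\<close> close by (intro integral_bound continuous_intros cont) auto
  finally have "norm (\<tau> *\<^sub>R f - W) \<le> e * \<tau>"
    by simp
  moreover have "f - (1 / \<tau>) *\<^sub>R W = (1 / \<tau>) *\<^sub>R (\<tau> *\<^sub>R f - W)"
    using \<open>0 < \<tau>\<close> by (simp add: scaleR_diff_right)
  ultimately have "norm (f - (1 / \<tau>) *\<^sub>R W) \<le> e"
    using \<open>0 < \<tau>\<close> by (simp add: pos_divide_le_eq)
  with \<open>(1 / \<tau>) *\<^sub>R W \<in> gen_dom T\<close> show ?thesis
    by blast
qed

lemma tendsto_scaleR_resolvent:
  assumes fs: "feller_semigroup T"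
  shows "((\<lambda>lam. lam *\<^sub>R resolvent T lam f) \<longlongrightarrow> f) at_top"
  unfolding tendsto_iff
proof (intro allI impI)
  fix e :: real assume "0 < e"
  then obtain k where k: "k \<in> gen_dom T" "norm (f - k) \<le> e / 3"
    using gen_dom_dense[OF fs, of "e / 3"] by auto
  have close: "dist (lam *\<^sub>R resolvent T lam f) f < e"
    if "0 < lam" "3 * norm (gen T k) / e < lam" for lam
  proof -
    have "norm (lam *\<^sub>R resolvent T lam f - lam *\<^sub>R resolvent T lam k) \<le> norm (f - k)"
      using norm_resolvent_le[OF fs \<open>0 < lam\<close>, of "f - k"] \<open>0 < lam\<close>
      by (simp add: resolvent_diff[OF fs] scaleR_diff_right[symmetric])
    moreover have "norm (lam *\<^sub>R resolvent T lam k - k) < e / 3"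
    proof -
      have "lam * norm (lam *\<^sub>R resolvent T lam k - k) \<le> norm (gen T k)"
        using norm_resolvent_le[OF fs \<open>0 < lam\<close>, of "gen T k"]
        by (simp add: resolvent_gen[OF fs that(1) k(1)])
      also have "\<dots> < lam * (e / 3)"
        using that(2) \<open>0 < e\<close> by (simp add: pos_divide_less_eq)
      finally show ?thesis
        using \<open>0 < lam\<close> by simp
    qed
    moreover have "dist (lam *\<^sub>R resolvent T lam f) f
        \<le> norm (lam *\<^sub>R resolvent T lam f - lam *\<^sub>R resolvent T lam k)
          + norm (lam *\<^sub>R resolvent T lam k - k) + norm (f - k)"
      using norm_triangle_ineq[of "lam *\<^sub>R resolvent T lam f - lam *\<^sub>R resolvent T lam k"
          "lam *\<^sub>R resolvent T lam k - k"]
        norm_triangle_ineq[of "lam *\<^sub>R resolvent T lam f - k" "k - f"]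
      by (simp add: dist_norm norm_minus_commute[of k f])
    ultimately show ?thesis
      using k(2) by linarith
  qed
  show "\<forall>\<^sub>F lam in at_top. dist (lam *\<^sub>R resolvent T lam f) f < e"
    using eventually_conj[OF eventually_gt_at_top[of 0] eventually_gt_at_top[of "3 * norm (gen T k) / e"]]
    by (rule eventually_mono) (use close in blast)
qed

lemma exit_law_LT_tendsto_0:
  assumes fs: "feller_semigroup T" and "exit_law_LT T l"
  shows "(l \<longlongrightarrow> 0) at_top"
proof -
  let ?R = "\<lambda>lam. resolvent T lam (l 1)"
  have resolvent_identity: "\<forall>lam>0. \<forall>mu>0. (lam - mu) *\<^sub>R resolvent T lam (l mu) = l mu - l lam"
    using assms(2) unfolding exit_law_LT_def by blast
  have "(l 1 - lam *\<^sub>R ?R lam) + (1 / lam) *\<^sub>R (lam *\<^sub>R ?R lam) = l lam" if "0 < lam" for lam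
  proof -
    have "l lam = l 1 - (lam - 1) *\<^sub>R ?R lam"
      using resolvent_identity that by simp
    also have "\<dots> = (l 1 - lam *\<^sub>R ?R lam) + (1 / lam) *\<^sub>R (lam *\<^sub>R ?R lam)"
      using that by (simp add: scaleR_diff_left)
    finally show ?thesis
      by (rule sym)
  qed
  then have "\<forall>\<^sub>F lam in at_top. (l 1 - lam *\<^sub>R ?R lam) + (1 / lam) *\<^sub>R (lam *\<^sub>R ?R lam) = l lam"
    using eventually_gt_at_top[of 0] by (rule eventually_mono[rotated]) blast
  moreover have "((\<lambda>lam. 1 / lam) \<longlongrightarrow> 0) (at_top :: real filter)"
    by (rule tendsto_divide_0[OF tendsto_const filterlim_at_top_imp_at_infinity[OF filterlim_ident]])
  then have "((\<lambda>lam. (l 1 - lam *\<^sub>R ?R lam) + (1 / lam) *\<^sub>R (lam *\<^sub>R ?R lam))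
      \<longlongrightarrow> (l 1 - l 1) + 0 *\<^sub>R l 1) at_top"
    by (intro tendsto_add tendsto_diff tendsto_const tendsto_scaleR tendsto_scaleR_resolvent[OF fs])
  ultimately show ?thesis
    by (simp add: tendsto_cong)
qed

end

lemma measure_singleton_0_le_laplace_transform:
  fixes M :: "real measure"
  assumes sets_M: "sets M = sets (restrict_space borel {0..})" and "subprob_space M" and "0 < lam"
  shows "measure M {0} \<le> (\<integral>t. exp (- lam * t) \<partial>M)"
proof -
  interpret subprob_space M by fact
  have space_M: "space M = {0..}"
    using sets_eq_imp_space_eq[OF sets_M] by simp
  have "(\<lambda>t::real. exp (- lam * t)) \<in> borel_measurable (restrict_space borel {0..})"
    by (intro measurable_restrict_space1) measurable
  then have "(\<lambda>t::real. exp (- lam * t)) \<in> borel_measurable M"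
    using measurable_cong_sets[OF sets_M refl] by blast
  moreover have "AE t in M. norm (exp (- lam * t)) \<le> 1"
    using \<open>0 < lam\<close> by (intro AE_I2) (simp add: space_M)
  ultimately have "integrable M (\<lambda>t. exp (- lam * t))"
    by (rule integrable_const_bound[rotated])
  have "measure M {0} = (\<integral>t. indicator {0} t \<partial>M)"
    using space_M by (simp add: Int_absorb2)
  also have "\<dots> \<le> (\<integral>t. exp (- lam * t) \<partial>M)"
    by (rule integral_mono'[OF \<open>integrable M _\<close>]) (auto simp: indicator_def)
  finally show ?thesis .
qed

theorem proposition2:
  fixes T :: "real \<Rightarrow> ('a::metric_space \<Rightarrow>\<^sub>C real) \<Rightarrow>\<^sub>L ('a \<Rightarrow>\<^sub>C real)"
    and l :: "real \<Rightarrow> ('a \<Rightarrow>\<^sub>C real)"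
    and m :: "'a \<Rightarrow> real measure"
  assumes "compact (UNIV :: 'a set)"
    and "feller_semigroup T"
    and "exit_law_LT T l"
    and "\<And>x. sets (m x) = sets (restrict_space borel {0..})"
    and "\<And>x. subprob_space (m x)"
    and "\<And>x lam. lam > 0 \<Longrightarrow>
           apply_bcontfun (l lam) x = (\<integral>t. exp (- lam * t) \<partial>(m x))"
  shows "\<forall>x. measure (m x) {0} = 0"
proof
  fix x
  have "((\<lambda>lam. norm (l lam)) \<longlongrightarrow> 0) at_top"
    using exit_law_LT_tendsto_0[OF assms(2,3)] by (simp add: tendsto_norm_zero)
  moreover have "\<forall>\<^sub>F lam in at_top. measure (m x) {0} \<le> norm (l lam)"
    using eventually_gt_at_top[of 0]
  proof (rule eventually_mono)
    fix lam :: real assume "0 < lam"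
    have "measure (m x) {0} \<le> (\<integral>t. exp (- lam * t) \<partial>m x)"
      using measure_singleton_0_le_laplace_transform[OF assms(4,5) \<open>0 < lam\<close>] .
    also have "\<dots> = l lam x"
      using assms(6)[OF \<open>0 < lam\<close>] by simp
    also have "\<dots> \<le> norm (l lam)"
      using norm_bounded[of "l lam" x] by simp
    finally show "measure (m x) {0} \<le> norm (l lam)" .
  qed
  ultimately have "measure (m x) {0} \<le> 0"
    using tendsto_lowerbound trivial_limit_at_top_linorder by blast
  then show "measure (m x) {0} = 0"
    using measure_nonneg[of "m x" "{0}"] by linarith
qed

end
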